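(* Let $a,b\ge 1$ be coprime integers with $a\le b$. Then there is a homogeneous polynomial $P_{a/b}(u,v,w)$ of degree $a+b-1$ with non-negative integer coefficients, not divisible by $u$, by $v$ or by $w$, such that $$M_{a/b}(x,y,z)=\frac{P_{a/b}(x^2,y^2,z^2)}{x^{a-1}\,y^{b-1}\,z^{a+b-1}}.$$
   Context: Markov polynomials. Let $x,y,z$ be indeterminates. Consider the set consisting of all rationals $\rho\in[0,1]$, each written in lowest terms $\rho=a/b$ with integers $a\ge 0$, $b\ge 1$, together with the formal symbol $1/0$ (i.e. $(a,b)=(1,0)$). To each such $\rho$ attach a Laurent polynomial $M_\rho(x,y,z)\in\mathbb{Z}[x^{\pm1},y^{\pm1},z^{\pm1}]$, the Markov polynomial, defined recursively by $M_{1/0}=y$, $M_{0/1}=x$, $M_{1/1}=\frac{x^2+y^2}{z}$, and: whenever $a/b$ and $c/d$ are elements of this set (non-negative integer pairs in lowest terms) with $|ad-bc|=1$ and $(a+2c)/(b+2d)\in[0,1]$, then $$M_{\frac{a+2c}{b+2d}}=\frac{M_{c/d}^2+M_{\frac{a+c}{b+d}}^2}{M_{a/b}}.$$ This determines $M_\rho$ uniquely for every rational $\rho\in[0,1]$. (For example $M_{1/2}=\frac{(x^2+y^2)^2+x^2z^2}{yz^2}$.) The triples $(M_{a/b},M_{c/d},M_{(a+c)/(b+d)})$ with $|ad-bc|=1$ solve $X^2+Y^2+Z^2=\frac{x^2+y^2+z^2}{xyz}XYZ$. *)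

theory Defs
  imports Complex_Main
begin

text \<open>Markov polynomials, evaluated at a point (x,y,z) with x,y,z > 0.
  A fraction a/b in lowest terms (or 1/0) is encoded by the pair (a,b) of naturals.
  markov_rel x y z a b v means: v is the value of M_{a/b} at (x,y,z),
  as produced by the defining recursion.\<close>

inductive markov_rel :: "real \<Rightarrow> real \<Rightarrow> real \<Rightarrow> nat \<Rightarrow> nat \<Rightarrow> real \<Rightarrow> bool"
  for x y z :: real where
  base_inf: "markov_rel x y z 1 0 y"
| base_zero: "markov_rel x y z 0 1 x"
| base_one: "markov_rel x y z 1 1 ((x\<^sup>2 + y\<^sup>2) / z)"
| step: "\<lbrakk> markov_rel x y z a b p; markov_rel x y z c d q;
           markov_rel x y z (a + c) (b + d) r;
           \<bar>int a * int d - int b * int c\<bar> = 1;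
           a + 2 * c \<le> b + 2 * d \<rbrakk>
         \<Longrightarrow> markov_rel x y z (a + 2 * c) (b + 2 * d) ((q\<^sup>2 + r\<^sup>2) / p)"

definition markov :: "nat \<Rightarrow> nat \<Rightarrow> real \<Rightarrow> real \<Rightarrow> real \<Rightarrow> real" where
  "markov a b x y z = (THE v. markov_rel x y z a b v)"

text \<open>A polynomial in three variables u,v,w with non-negative integer coefficients is
  given by its coefficient function c (coefficient of u^i v^j w^k is c i j k).\<close>

definition homogeneous3 :: "(nat \<Rightarrow> nat \<Rightarrow> nat \<Rightarrow> nat) \<Rightarrow> nat \<Rightarrow> bool" where
  "homogeneous3 c n \<longleftrightarrow> (\<forall>i j k. c i j k \<noteq> 0 \<longrightarrow> i + j + k = n)"

text \<open>Evaluation of a polynomial homogeneous of degree n (all monomials have exponents \<le> n).\<close>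
definition eval3 :: "(nat \<Rightarrow> nat \<Rightarrow> nat \<Rightarrow> nat) \<Rightarrow> nat \<Rightarrow> real \<Rightarrow> real \<Rightarrow> real \<Rightarrow> real" where
  "eval3 c n u v w = (\<Sum>i\<le>n. \<Sum>j\<le>n. \<Sum>k\<le>n. real (c i j k) * u ^ i * v ^ j * w ^ k)"

definition not_div_u :: "(nat \<Rightarrow> nat \<Rightarrow> nat \<Rightarrow> nat) \<Rightarrow> bool" where
  "not_div_u c \<longleftrightarrow> (\<exists>j k. c 0 j k \<noteq> 0)"
definition not_div_v :: "(nat \<Rightarrow> nat \<Rightarrow> nat \<Rightarrow> nat) \<Rightarrow> bool" where
  "not_div_v c \<longleftrightarrow> (\<exists>i k. c i 0 k \<noteq> 0)"
definition not_div_w :: "(nat \<Rightarrow> nat \<Rightarrow> nat \<Rightarrow> nat) \<Rightarrow> bool" where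
  "not_div_w c \<longleftrightarrow> (\<exists>i j. c i j 0 \<noteq> 0)"

end

theory Submission
  imports Defs "HOL-Library.Multiset" "HOL-Library.Product_Plus"
begin

text \<open>
  M_{a/b} is the upper-right entry of a product of the two Cohn matrices A and B below, taken
  along the Stern-Brocot tree: if a/b > c/d are Farey neighbours with matrices X and Y, their
  mediant gets X Y. For matrices of determinant 1 whose trace is k = (x^2 + y^2 + z^2)/(xyz)
  times their upper-right entry, Cayley-Hamilton gives e(X X Y) = k e(X) e(X Y) - e(Y) for the
  upper-right entry e; this is the Vieta involution of e(X)^2 + e(Y)^2 + e(X Y)^2 =
  k e(X) e(Y) e(X Y), i.e. the defining recursion of M. So M_{a/b} is a Laurent polynomial
  with non-negative coefficients. The parities, degrees and lower bounds of the exponents in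
  the entries of A and B are preserved under products; in the upper-right entry for a/b they
  say that it equals P(x^2, y^2, z^2) / (x^(a-1) y^(b-1) z^(a+b-1)) with P homogeneous of
  degree a + b - 1 and divisible by none of the variables.
\<close>

section \<open>Laurent polynomials with natural coefficients\<close>

(* A Laurent polynomial in x, y, z with natural coefficients is the multiset of its monomials,
   a monomial being its exponent vector. *)
type_synonym monomial = "int \<times> int \<times> int"

type_synonym lpoly = "monomial multiset"

fun monomial_value :: "real \<Rightarrow> real \<Rightarrow> real \<Rightarrow> monomial \<Rightarrow> real" where
  "monomial_value x y z (i, j, k) = power_int x i * power_int y j * power_int z k"

definition lpoly_value :: "real \<Rightarrow> real \<Rightarrow> real \<Rightarrow> lpoly \<Rightarrow> real" where
  "lpoly_value x y z P = (\<Sum>m\<in>#P. monomial_value x y z m)"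

definition lpoly_mult :: "lpoly \<Rightarrow> lpoly \<Rightarrow> lpoly" where
  "lpoly_mult P Q = (\<Sum>m\<in>#P. image_mset ((+) m) Q)"

lemma lpoly_value_empty [simp]: "lpoly_value x y z {#} = 0"
  and lpoly_value_add_mset [simp]:
    "lpoly_value x y z (add_mset m P) = monomial_value x y z m + lpoly_value x y z P"
  and lpoly_value_union [simp]:
    "lpoly_value x y z (P + Q) = lpoly_value x y z P + lpoly_value x y z Q"
  by (simp_all add: lpoly_value_def)

lemma lpoly_mult_empty [simp]: "lpoly_mult {#} Q = {#}"
  and lpoly_mult_add_mset [simp]:
    "lpoly_mult (add_mset m P) Q = image_mset ((+) m) Q + lpoly_mult P Q"
  by (simp_all add: lpoly_mult_def)

lemma mem_lpoly_mult: "n \<in># lpoly_mult P Q \<longleftrightarrow> (\<exists>m\<in>#P. \<exists>m'\<in>#Q. n = m + m')"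
  by (induction P) auto

lemma monomial_value_add:
  "x \<noteq> 0 \<Longrightarrow> y \<noteq> 0 \<Longrightarrow> z \<noteq> 0 \<Longrightarrow>
    monomial_value x y z (m + n) = monomial_value x y z m * monomial_value x y z n"
  by (cases m; cases n) (simp add: power_int_add)

lemma lpoly_value_mult:
  assumes "x \<noteq> 0" "y \<noteq> 0" "z \<noteq> 0"
  shows "lpoly_value x y z (lpoly_mult P Q) = lpoly_value x y z P * lpoly_value x y z Q"
proof (induction P)
  case (add m P)
  have "lpoly_value x y z (image_mset ((+) m) Q) = monomial_value x y z m * lpoly_value x y z Q"
    by (induction Q) (simp_all add: monomial_value_add[OF assms] algebra_simps)
  with add show ?case by (simp add: algebra_simps)
qed simp

lemma lpoly_value_pos:
  assumes "x > 0" "y > 0" "z > 0"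
  shows "P \<noteq> {#} \<Longrightarrow> lpoly_value x y z P > 0"
proof (induction P)
  case (add m P)
  have "monomial_value x y z m > 0" using assms by (cases m) simp
  with add show ?case by (cases "P = {#}") auto
qed simp

lemma sum_mset_eq_sum_count:
  fixes f :: "'a \<Rightarrow> 'b::comm_semiring_1"
  assumes "finite T" "set_mset M \<subseteq> T"
  shows "(\<Sum>m\<in>#M. f m) = (\<Sum>t\<in>T. of_nat (count M t) * f t)"
  using assms(2)
proof (induction M)
  case (add m M)
  have "(\<Sum>t\<in>T. of_nat (count (add_mset m M) t) * f t) =
      (\<Sum>t\<in>T. of_nat (count M t) * f t + (if t = m then f t else 0))"
    by (intro sum.cong) (auto simp: algebra_simps)
  also have "\<dots> = (\<Sum>t\<in>T. of_nat (count M t) * f t) + f m"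
    using add.prems assms(1) by (simp add: sum.distrib)
  finally show ?case using add by (simp add: add.commute)
qed simp

section \<open>2 \<times> 2 matrices\<close>

(* Rows and columns are indexed by bool: False is the first, True the second. *)
type_synonym 'a mat2 = "bool \<Rightarrow> bool \<Rightarrow> 'a"

definition mat2 :: "'a \<Rightarrow> 'a \<Rightarrow> 'a \<Rightarrow> 'a \<Rightarrow> 'a mat2" where
  "mat2 a b c d = (\<lambda>i j. if i then (if j then d else c) else (if j then b else a))"

abbreviation upper_right :: "'a mat2 \<Rightarrow> 'a" where
  "upper_right M \<equiv> M False True"

definition mat2_mult :: "'a::comm_ring_1 mat2 \<Rightarrow> 'a mat2 \<Rightarrow> 'a mat2" where
  "mat2_mult P Q = (\<lambda>i j. P i False * Q False j + P i True * Q True j)"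

definition mat2_det :: "'a::comm_ring_1 mat2 \<Rightarrow> 'a" where
  "mat2_det M = M False False * M True True - M False True * M True False"

definition mat2_trace :: "'a::comm_ring_1 mat2 \<Rightarrow> 'a" where
  "mat2_trace M = M False False + M True True"

lemma mat2_det_mult: "mat2_det (mat2_mult P Q) = mat2_det P * mat2_det Q"
  by (simp add: mat2_det_def mat2_mult_def algebra_simps)

lemma mat2_cayley_hamilton_left:
  "mat2_mult U (mat2_mult U X) = (\<lambda>i j. mat2_trace U * mat2_mult U X i j - mat2_det U * X i j)"
  by (simp add: fun_eq_iff all_bool_eq mat2_mult_def mat2_trace_def mat2_det_def algebra_simps)

lemma mat2_cayley_hamilton_right:
  "mat2_mult (mat2_mult X U) U = (\<lambda>i j. mat2_trace U * mat2_mult X U i j - mat2_det U * X i j)"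
  by (simp add: fun_eq_iff all_bool_eq mat2_mult_def mat2_trace_def mat2_det_def algebra_simps)

definition lmat_mult :: "lpoly mat2 \<Rightarrow> lpoly mat2 \<Rightarrow> lpoly mat2" where
  "lmat_mult P Q = (\<lambda>i j. lpoly_mult (P i False) (Q False j) + lpoly_mult (P i True) (Q True j))"

definition mat2_eval :: "real \<Rightarrow> real \<Rightarrow> real \<Rightarrow> lpoly mat2 \<Rightarrow> real mat2" where
  "mat2_eval x y z W = (\<lambda>i j. lpoly_value x y z (W i j))"

lemma mat2_eval_mult:
  "x \<noteq> 0 \<Longrightarrow> y \<noteq> 0 \<Longrightarrow> z \<noteq> 0 \<Longrightarrow>
    mat2_eval x y z (lmat_mult P Q) = mat2_mult (mat2_eval x y z P) (mat2_eval x y z Q)"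
  by (simp add: mat2_eval_def lmat_mult_def mat2_mult_def lpoly_value_mult)

lemma mem_lmat_mult:
  "n \<in># lmat_mult P Q i j \<longleftrightarrow> (\<exists>k. \<exists>m\<in>#P i k. \<exists>m'\<in>#Q k j. n = m + m')"
  by (simp add: lmat_mult_def mem_lpoly_mult ex_bool_eq disj_commute)

lemma lmat_mult_memI: "m \<in># P i k \<Longrightarrow> m' \<in># Q k j \<Longrightarrow> m + m' \<in># lmat_mult P Q i j"
  unfolding mem_lmat_mult by blast

lemma lmat_mult_witness:
  fixes f :: "monomial \<Rightarrow> int"
  assumes "\<And>m m'. f (m + m') = f m + f m'"
    and "\<exists>m\<in>#P i k. f m = s" "\<exists>m\<in>#Q k j. f m = t"
  shows "\<exists>m\<in>#lmat_mult P Q i j. f m = s + t"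
  using assms lmat_mult_memI[of _ P i k _ Q j] by fastforce

section \<open>Markov pairs of matrices\<close>

definition markov_pair :: "'a::comm_ring_1 \<Rightarrow> 'a mat2 \<Rightarrow> 'a mat2 \<Rightarrow> bool" where
  "markov_pair k X Y \<longleftrightarrow> mat2_det X = 1 \<and> mat2_det Y = 1 \<and>
     (\<forall>W \<in> {X, Y, mat2_mult X Y}. mat2_trace W = k * upper_right W) \<and>
     (upper_right X)\<^sup>2 + (upper_right Y)\<^sup>2 + (upper_right (mat2_mult X Y))\<^sup>2 =
       k * upper_right X * upper_right Y * upper_right (mat2_mult X Y)"

lemma markov_vieta:
  fixes p q r k :: "'a::comm_ring_1"
  assumes "p\<^sup>2 + q\<^sup>2 + r\<^sup>2 = k * p * q * r"
  shows "p\<^sup>2 + r\<^sup>2 + (k * p * r - q)\<^sup>2 = k * p * r * (k * p * r - q)"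
proof -
  have "p\<^sup>2 + r\<^sup>2 + (k * p * r - q)\<^sup>2 - k * p * r * (k * p * r - q) =
      p\<^sup>2 + q\<^sup>2 + r\<^sup>2 - k * p * q * r"
    by (simp add: power2_eq_square algebra_simps)
  with assms show ?thesis by simp
qed

lemma markov_pair_left:
  assumes "markov_pair k X Y"
  shows "upper_right (mat2_mult X (mat2_mult X Y)) =
           k * upper_right X * upper_right (mat2_mult X Y) - upper_right Y"
    and "markov_pair k X (mat2_mult X Y)"
proof -
  let ?XY = "mat2_mult X Y"
  have CH: "mat2_mult X ?XY = (\<lambda>i j. mat2_trace X * ?XY i j - Y i j)"
    using assms mat2_cayley_hamilton_left[of X Y] by (simp add: markov_pair_def)
  show E: "upper_right (mat2_mult X ?XY) = k * upper_right X * upper_right ?XY - upper_right Y"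
    using assms unfolding CH by (simp add: markov_pair_def)
  have "mat2_trace (mat2_mult X ?XY) = mat2_trace X * mat2_trace ?XY - mat2_trace Y"
    unfolding CH by (simp add: mat2_trace_def algebra_simps)
  then have "mat2_trace (mat2_mult X ?XY) = k * upper_right (mat2_mult X ?XY)"
    using assms unfolding E by (simp add: markov_pair_def algebra_simps)
  moreover have "mat2_det ?XY = 1"
    using assms by (simp add: markov_pair_def mat2_det_mult)
  moreover have "(upper_right X)\<^sup>2 + (upper_right ?XY)\<^sup>2 + (upper_right (mat2_mult X ?XY))\<^sup>2 =
      k * upper_right X * upper_right ?XY * upper_right (mat2_mult X ?XY)"
    unfolding E by (rule markov_vieta) (use assms in \<open>simp add: markov_pair_def\<close>)
  ultimately show "markov_pair k X ?XY"
    using assms by (simp add: markov_pair_def)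
qed

lemma markov_pair_right:
  assumes "markov_pair k X Y"
  shows "upper_right (mat2_mult (mat2_mult X Y) Y) =
           k * upper_right Y * upper_right (mat2_mult X Y) - upper_right X"
    and "markov_pair k (mat2_mult X Y) Y"
proof -
  let ?XY = "mat2_mult X Y"
  have CH: "mat2_mult ?XY Y = (\<lambda>i j. mat2_trace Y * ?XY i j - X i j)"
    using assms mat2_cayley_hamilton_right[of X Y] by (simp add: markov_pair_def)
  show E: "upper_right (mat2_mult ?XY Y) = k * upper_right Y * upper_right ?XY - upper_right X"
    using assms unfolding CH by (simp add: markov_pair_def)
  have "mat2_trace (mat2_mult ?XY Y) = mat2_trace Y * mat2_trace ?XY - mat2_trace X"
    unfolding CH by (simp add: mat2_trace_def algebra_simps)
  then have "mat2_trace (mat2_mult ?XY Y) = k * upper_right (mat2_mult ?XY Y)"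
    using assms unfolding E by (simp add: markov_pair_def algebra_simps)
  moreover have "mat2_det ?XY = 1"
    using assms by (simp add: markov_pair_def mat2_det_mult)
  moreover have "(upper_right Y)\<^sup>2 + (upper_right ?XY)\<^sup>2 + (upper_right (mat2_mult ?XY Y))\<^sup>2 =
      k * upper_right Y * upper_right ?XY * upper_right (mat2_mult ?XY Y)"
    unfolding E by (rule markov_vieta) (use assms in \<open>simp add: markov_pair_def algebra_simps\<close>)
  ultimately show "markov_pair k ?XY Y"
    using assms by (simp add: markov_pair_def algebra_simps)
qed

lemma markov_pair_left_quotient:
  fixes X Y :: "'a::field mat2"
  assumes "markov_pair k X Y" "upper_right Y \<noteq> 0"
  shows "upper_right (mat2_mult X (mat2_mult X Y)) =
           ((upper_right X)\<^sup>2 + (upper_right (mat2_mult X Y))\<^sup>2) / upper_right Y"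
proof -
  have "(upper_right X)\<^sup>2 + (upper_right (mat2_mult X Y))\<^sup>2 =
      (k * upper_right X * upper_right (mat2_mult X Y) - upper_right Y) * upper_right Y"
    using assms(1) unfolding markov_pair_def by (simp add: power2_eq_square algebra_simps)
  with assms show ?thesis by (simp add: markov_pair_left(1))
qed

lemma markov_pair_right_quotient:
  fixes X Y :: "'a::field mat2"
  assumes "markov_pair k X Y" "upper_right X \<noteq> 0"
  shows "upper_right (mat2_mult (mat2_mult X Y) Y) =
           ((upper_right Y)\<^sup>2 + (upper_right (mat2_mult X Y))\<^sup>2) / upper_right X"
proof -
  have "(upper_right Y)\<^sup>2 + (upper_right (mat2_mult X Y))\<^sup>2 =
      (k * upper_right Y * upper_right (mat2_mult X Y) - upper_right X) * upper_right X"
    using assms(1) unfolding markov_pair_def by (simp add: power2_eq_square algebra_simps)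
  with assms show ?thesis by (simp add: markov_pair_right(1))
qed

section \<open>Cohn matrices along the Stern-Brocot tree\<close>

(* The Cohn matrices A = [[(x^2 + z^2)/(yz), x], [x/z^2, y/z]] and
   B = [[x/z, y], [y/z^2, (y^2 + z^2)/(xz)]], with upper-right entries M_{0/1} and M_{1/0}. *)
definition cohn_A :: "lpoly mat2" where
  "cohn_A = mat2 {#(2, -1, -1), (0, -1, 1)#} {#(1, 0, 0)#} {#(1, 0, -2)#} {#(0, 1, -1)#}"

definition cohn_B :: "lpoly mat2" where
  "cohn_B = mat2 {#(1, 0, -1)#} {#(0, 1, 0)#} {#(0, 1, -2)#} {#(-1, 2, -1), (-1, 0, 1)#}"

definition markov_constant :: "real \<Rightarrow> real \<Rightarrow> real \<Rightarrow> real" where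
  "markov_constant x y z = (x\<^sup>2 + y\<^sup>2 + z\<^sup>2) / (x * y * z)"

lemma upper_right_cohn_A: "upper_right (mat2_eval x y z cohn_A) = x"
  and upper_right_cohn_B: "upper_right (mat2_eval x y z cohn_B) = y"
  by (simp_all add: mat2_eval_def cohn_A_def cohn_B_def mat2_def)

lemma upper_right_cohn_BA:
  "x \<noteq> 0 \<Longrightarrow> y \<noteq> 0 \<Longrightarrow> z \<noteq> 0 \<Longrightarrow>
    upper_right (mat2_eval x y z (lmat_mult cohn_B cohn_A)) = (x\<^sup>2 + y\<^sup>2) / z"
  by (simp add: mat2_eval_mult)
    (simp add: mat2_mult_def mat2_eval_def cohn_A_def cohn_B_def mat2_def power_int_minus
      field_simps power2_eq_square)

lemma markov_pair_cohn_BA: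
  assumes "x > 0" "y > 0" "z > 0"
  shows "markov_pair (markov_constant x y z) (mat2_eval x y z cohn_B) (mat2_eval x y z cohn_A)"
  using assms
  by (simp add: markov_pair_def mat2_det_def mat2_trace_def mat2_mult_def mat2_eval_def cohn_A_def
      cohn_B_def mat2_def markov_constant_def power_int_minus field_simps power2_eq_square)

(* The Stern-Brocot tree of Farey neighbours a/b > c/d (so ad - bc = 1) with their Cohn matrices;
   the mediant (a + c)/(b + d) gets the matrix X Y. *)
inductive cohn_tree :: "nat \<Rightarrow> nat \<Rightarrow> nat \<Rightarrow> nat \<Rightarrow> lpoly mat2 \<Rightarrow> lpoly mat2 \<Rightarrow> bool" where
  root: "cohn_tree 1 0 0 1 cohn_B cohn_A"
| left: "cohn_tree a b c d X Y \<Longrightarrow> cohn_tree a b (a + c) (b + d) X (lmat_mult X Y)"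
| right: "cohn_tree a b c d X Y \<Longrightarrow> cohn_tree (a + c) (b + d) c d (lmat_mult X Y) Y"

lemma cohn_tree_det: "cohn_tree a b c d X Y \<Longrightarrow> a * d = b * c + 1"
  by (induction rule: cohn_tree.induct) (simp_all add: algebra_simps)

lemma farey_det_pos:
  fixes a b c d :: nat
  shows "a * d = b * c + 1 \<Longrightarrow> 1 \<le> a \<and> 1 \<le> d"
  by (cases a; cases d) auto

lemma cohn_tree_markov_pair:
  assumes "x > 0" "y > 0" "z > 0"
  shows "cohn_tree a b c d X Y \<Longrightarrow>
    markov_pair (markov_constant x y z) (mat2_eval x y z X) (mat2_eval x y z Y)"
proof (induction rule: cohn_tree.induct)
  case root
  show ?case using markov_pair_cohn_BA[OF assms] .
next
  case (left a b c d X Y)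
  then show ?case using assms by (simp add: mat2_eval_mult markov_pair_left)
next
  case (right a b c d X Y)
  then show ?case using assms by (simp add: mat2_eval_mult markov_pair_right)
qed

lemma farey_neighbours_nested:
  fixes a b c d :: nat
  assumes det: "a * d = b * c + 1" and not_root: "\<not> (a = 1 \<and> b = 0 \<and> c = 0 \<and> d = 1)"
  shows "(c \<le> a \<and> d \<le> b) \<or> (a \<le> c \<and> b \<le> d)"
proof (rule ccontr)
  assume "\<not> ?thesis"
  then consider "a < c" "d < b" | "c < a" "b < d" by linarith
  then show False
  proof cases
    case 1
    then have "a * d \<le> b * c" by (metis mult.commute less_imp_le mult_le_mono)
    with det show False by linarith
  next
    case 2
    then have "(c + 1) * (b + 1) \<le> a * d" by (intro mult_mono) auto
    with det have "b = 0" "c = 0" by (simp_all add: algebra_simps)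
    with det not_root show False by simp
  qed
qed

lemma cohn_tree_exists: "a * d = b * c + 1 \<Longrightarrow> \<exists>X Y. cohn_tree a b c d X Y"
proof (induction "a + b + c + d" arbitrary: a b c d rule: less_induct)
  case less
  consider "a = 1 \<and> b = 0 \<and> c = 0 \<and> d = 1" | "c \<le> a \<and> d \<le> b" | "a \<le> c \<and> b \<le> d"
    using farey_neighbours_nested[OF less.prems] by blast
  then show ?case
  proof cases
    case 1
    then show ?thesis using cohn_tree.root by blast
  next
    case 2
    then obtain a' b' where ab: "a = a' + c" "b = b' + d" by (metis add.commute le_add_diff_inverse)
    have "a' * d = b' * c + 1" "c + d > 0" using less.prems unfolding ab by (auto simp: algebra_simps)
    then obtain X Y where "cohn_tree a' b' c d X Y" using less.hyps ab by fastforce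
    then show ?thesis unfolding ab by (blast intro: cohn_tree.right)
  next
    case 3
    then obtain c' d' where cd: "c = a + c'" "d = b + d'" by (metis le_add_diff_inverse)
    have "a * d' = b * c' + 1" "a + b > 0" using less.prems unfolding cd by (auto simp: algebra_simps)
    then obtain X Y where "cohn_tree a b c' d' X Y" using less.hyps cd by fastforce
    then show ?thesis unfolding cd by (blast intro: cohn_tree.left)
  qed
qed

lemma coprime_farey_split:
  fixes a b :: nat
  assumes "coprime a b" "0 < a" "0 < b"
  shows "\<exists>a1 b1 a2 b2. a = a1 + a2 \<and> b = b1 + b2 \<and> a1 * b2 = b1 * a2 + 1"
  using assms
proof (induction "a + b" arbitrary: a b rule: less_induct)
  case less
  consider "a = b" | "b < a" | "a < b" by linarith
  then show ?case
  proof cases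
    case 1
    with less.prems have "a = 1" "b = 1" by simp_all
    then show ?thesis by (intro exI[of _ 1] exI[of _ 0]) simp
  next
    case 2
    with less.prems have "coprime (a - b) b" by (simp add: coprime_iff_gcd_eq_1 gcd_diff1_nat)
    with less.hyps[of "a - b" b] 2 less.prems obtain a1 b1 a2 b2
      where "a - b = a1 + a2" "b = b1 + b2" "a1 * b2 = b1 * a2 + 1" by auto
    with 2 show ?thesis
      by (intro exI[of _ "a1 + b1"] exI[of _ b1] exI[of _ "a2 + b2"] exI[of _ b2]) (simp add: algebra_simps)
  next
    case 3
    with less.prems have "coprime a (b - a)"
      by (simp add: coprime_iff_gcd_eq_1 gcd_diff1_nat gcd.commute[of a])
    with less.hyps[of a "b - a"] 3 less.prems obtain a1 b1 a2 b2
      where "a = a1 + a2" "b - a = b1 + b2" "a1 * b2 = b1 * a2 + 1" by auto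
    with 3 show ?thesis
      by (intro exI[of _ a1] exI[of _ "a1 + b1"] exI[of _ a2] exI[of _ "a2 + b2"]) (simp add: algebra_simps)
  qed
qed

section \<open>Exponents of the Cohn matrices\<close>

(* The guards exempt A (a = 0) and B (b = 0) from the sharper bounds in the first row and in the
   second column. *)
fun cohn_exponent :: "nat \<Rightarrow> nat \<Rightarrow> bool \<Rightarrow> bool \<Rightarrow> monomial \<Rightarrow> bool" where
  "cohn_exponent a b i j (e1, e2, e3) \<longleftrightarrow>
     e1 + e2 + e3 = of_bool j - of_bool i \<and>
     even (e1 - int a - of_bool (i \<noteq> j)) \<and> even (e2 - int b - of_bool (i \<noteq> j)) \<and>
     even (e3 - int a - int b - of_bool (i \<noteq> j)) \<and>
     e1 \<ge> of_bool (\<not> i \<and> a \<ge> 1) - int a \<and>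
     e2 \<ge> of_bool (j \<and> b \<ge> 1) - int b \<and>
     e3 \<ge> of_bool j - of_bool i - int a - int b"

(* The witnesses say that the lower bounds of cohn_exponent are attained; in the upper-right
   entry they make the final polynomial indivisible by u, v and w. *)
definition cohn_shape :: "nat \<Rightarrow> nat \<Rightarrow> lpoly mat2 \<Rightarrow> bool" where
  "cohn_shape a b W \<longleftrightarrow>
     (\<forall>i j. \<forall>m\<in>#W i j. cohn_exponent a b i j m) \<and>
     (\<forall>i j. \<exists>m\<in>#W i j. snd (snd m) = of_bool j - of_bool i - int a - int b) \<and>
     (\<exists>m\<in>#W True True. fst m = - int a) \<and>
     (\<exists>m\<in>#W False False. fst (snd m) = - int b) \<and>
     (a \<ge> 1 \<longrightarrow> (\<exists>m\<in>#W False True. fst m = 1 - int a)) \<and>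
     (b \<ge> 1 \<longrightarrow> (\<exists>m\<in>#W False True. fst (snd m) = 1 - int b))"

lemma cohn_exponent_add:
  assumes "cohn_exponent a1 b1 i k m1" "cohn_exponent a2 b2 k j m2" "a1 \<ge> 1" "b2 \<ge> 1"
  shows "cohn_exponent (a1 + a2) (b1 + b2) i j (m1 + m2)"
proof -
  obtain x1 y1 z1 x2 y2 z2 where m: "m1 = (x1, y1, z1)" "m2 = (x2, y2, z2)" by (cases m1, cases m2)
  show ?thesis
    using assms unfolding m by (cases i; cases j; cases k) (auto simp: of_bool_def split: if_splits)
qed

lemma cohn_shape_mult:
  assumes P: "cohn_shape a1 b1 P" and Q: "cohn_shape a2 b2 Q" and "a1 \<ge> 1" "b2 \<ge> 1"
  shows "cohn_shape (a1 + a2) (b1 + b2) (lmat_mult P Q)"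
proof -
  have "\<forall>m\<in>#lmat_mult P Q i j. cohn_exponent (a1 + a2) (b1 + b2) i j m" for i j
  proof
    fix m assume "m \<in># lmat_mult P Q i j"
    then obtain k m1 m2 where "m1 \<in># P i k" "m2 \<in># Q k j" "m = m1 + m2"
      unfolding mem_lmat_mult by blast
    with P Q assms(3,4) show "cohn_exponent (a1 + a2) (b1 + b2) i j m"
      unfolding cohn_shape_def by (blast intro: cohn_exponent_add)
  qed
  moreover have "\<exists>m\<in>#lmat_mult P Q i j. snd (snd m) =
      (of_bool False - of_bool i - int a1 - int b1) + (of_bool j - of_bool False - int a2 - int b2)" for i j
    by (rule lmat_mult_witness[where k = False], simp) (use P Q in \<open>unfold cohn_shape_def, blast+\<close>)
  moreover have "\<exists>m\<in>#lmat_mult P Q True True. fst m = - int a1 + - int a2"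
    by (rule lmat_mult_witness[where k = True]) (use P Q in \<open>simp_all add: cohn_shape_def\<close>)
  moreover have "\<exists>m\<in>#lmat_mult P Q False False. fst (snd m) = - int b1 + - int b2"
    by (rule lmat_mult_witness[where k = False]) (use P Q in \<open>simp_all add: cohn_shape_def\<close>)
  moreover have "\<exists>m\<in>#lmat_mult P Q False True. fst m = (1 - int a1) + - int a2"
    by (rule lmat_mult_witness[where k = True]) (use P Q assms(3) in \<open>simp_all add: cohn_shape_def\<close>)
  moreover have "\<exists>m\<in>#lmat_mult P Q False True. fst (snd m) = - int b1 + (1 - int b2)"
    by (rule lmat_mult_witness[where k = False]) (use P Q assms(4) in \<open>simp_all add: cohn_shape_def\<close>)
  ultimately show ?thesis
    unfolding cohn_shape_def by (simp add: algebra_simps)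
qed

lemma cohn_shape_A: "cohn_shape 0 1 cohn_A"
  unfolding cohn_shape_def cohn_A_def mat2_def by (auto split: if_splits)

lemma cohn_shape_B: "cohn_shape 1 0 cohn_B"
  unfolding cohn_shape_def cohn_B_def mat2_def by (auto split: if_splits)

lemma cohn_tree_shape: "cohn_tree a b c d X Y \<Longrightarrow> cohn_shape a b X \<and> cohn_shape c d Y"
proof (induction rule: cohn_tree.induct)
  case root
  show ?case using cohn_shape_A cohn_shape_B by simp
next
  case (left a b c d X Y)
  with farey_det_pos[OF cohn_tree_det[OF left.hyps]] show ?case
    by (simp add: cohn_shape_mult)
next
  case (right a b c d X Y)
  with farey_det_pos[OF cohn_tree_det[OF right.hyps]] show ?case
    by (simp add: cohn_shape_mult)
qed

lemma cohn_shape_nonempty: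
  assumes "cohn_shape a b W" shows "W i j \<noteq> {#}"
proof -
  from assms obtain m where "m \<in># W i j" unfolding cohn_shape_def by blast
  then show ?thesis by auto
qed

lemma cohn_shape_upper_right_pos:
  "cohn_shape a b W \<Longrightarrow> x > 0 \<Longrightarrow> y > 0 \<Longrightarrow> z > 0 \<Longrightarrow> upper_right (mat2_eval x y z W) > 0"
  unfolding mat2_eval_def by (metis lpoly_value_pos cohn_shape_nonempty)

section \<open>The Markov recursion\<close>

lemma cohn_tree_upper_right_children:
  assumes "x > 0" "y > 0" "z > 0" and tree: "cohn_tree a b c d X Y"
  defines "E W \<equiv> upper_right (mat2_eval x y z W)"
  shows "E (lmat_mult X (lmat_mult X Y)) = ((E X)\<^sup>2 + (E (lmat_mult X Y))\<^sup>2) / E Y"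
    and "E (lmat_mult (lmat_mult X Y) Y) = ((E Y)\<^sup>2 + (E (lmat_mult X Y))\<^sup>2) / E X"
proof -
  have pair: "markov_pair (markov_constant x y z) (mat2_eval x y z X) (mat2_eval x y z Y)"
    using cohn_tree_markov_pair[OF assms(1-3) tree] .
  have "E X > 0" "E Y > 0"
    using cohn_tree_shape[OF tree] assms(1-3) unfolding E_def by (blast intro: cohn_shape_upper_right_pos)+
  with pair assms(1-3) show "E (lmat_mult X (lmat_mult X Y)) = ((E X)\<^sup>2 + (E (lmat_mult X Y))\<^sup>2) / E Y"
    and "E (lmat_mult (lmat_mult X Y) Y) = ((E Y)\<^sup>2 + (E (lmat_mult X Y))\<^sup>2) / E X"
    by (simp_all add: E_def mat2_eval_mult markov_pair_left_quotient markov_pair_right_quotient)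
qed

lemma farey_step_not_base:
  fixes a b c d :: nat
  assumes "\<bar>int a * int d - int b * int c\<bar> = 1"
  shows "1 < a + 2 * c \<or> 1 < b + 2 * d"
  using assms by (cases "c = 0 \<and> d = 0") auto

lemma unimodular_split_unique_oriented:
  fixes p1 p2 q1 q2 r1 r2 t1 t2 s :: int
  assumes nonneg: "0 \<le> p1" "0 \<le> p2" "0 \<le> q1" "0 \<le> q2" "0 \<le> r1" "0 \<le> r2" "0 \<le> t1" "0 \<le> t2"
    and sum: "p1 + q1 = r1 + t1" "p2 + q2 = r2 + t2"
    and det: "p1 * q2 - p2 * q1 = s" "r1 * t2 - r2 * t1 = s" and unit: "\<bar>s\<bar> = 1"
  shows "p1 = r1 \<and> p2 = r2"
proof -
  define \<beta> where "\<beta> = s * (p1 * r2 - p2 * r1)"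
  have "s * s = 1" using unit abs_mult_self_eq[of s] by simp
  \<comment> \<open>r - p is parallel to the common sum p + q = r + t, which is primitive\<close>
  then have r: "r1 = p1 + \<beta> * (p1 + q1)" "r2 = p2 + \<beta> * (p2 + q2)"
    using det sum unfolding \<beta>_def by algebra+
  have "\<beta> = 0"
  proof (rule ccontr)
    assume "\<beta> \<noteq> 0"
    then consider "1 \<le> \<beta>" | "\<beta> \<le> -1" by linarith
    then show False
    proof cases
      case 1
      then have "p1 + q1 \<le> \<beta> * (p1 + q1)" "p2 + q2 \<le> \<beta> * (p2 + q2)"
        using nonneg mult_right_mono[of 1 \<beta>] by simp_all
      with r sum nonneg have "p1 = 0" "p2 = 0" by linarith+
      with det unit show False by simp
    next
      case 2
      then have "\<beta> * (p1 + q1) \<le> - (p1 + q1)" "\<beta> * (p2 + q2) \<le> - (p2 + q2)"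
        using nonneg mult_right_mono[of \<beta> "-1" "p1 + q1"] mult_right_mono[of \<beta> "-1" "p2 + q2"]
        by simp_all
      with r sum nonneg have "r1 = 0" "r2 = 0" by linarith+
      with det unit show False by simp
    qed
  qed
  with r show ?thesis by simp
qed

lemma unimodular_split_unique:
  fixes p1 p2 q1 q2 r1 r2 t1 t2 :: nat
  assumes sum: "p1 + q1 = r1 + t1" "p2 + q2 = r2 + t2"
    and det: "\<bar>int p1 * int q2 - int p2 * int q1\<bar> = 1" "\<bar>int r1 * int t2 - int r2 * int t1\<bar> = 1"
  shows "(p1 = r1 \<and> p2 = r2 \<and> q1 = t1 \<and> q2 = t2) \<or> (p1 = t1 \<and> p2 = t2 \<and> q1 = r1 \<and> q2 = r2)"
proof (cases "int p1 * int q2 - int p2 * int q1 = int r1 * int t2 - int r2 * int t1")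
  case True
  have "int p1 = int r1 \<and> int p2 = int r2"
    by (rule unimodular_split_unique_oriented[OF _ _ _ _ _ _ _ _ _ _ True refl det(2)])
      (use sum in simp_all)
  with sum show ?thesis by simp
next
  case False
  with det have "int p1 * int q2 - int p2 * int q1 = - (int r1 * int t2 - int r2 * int t1)"
    by (auto simp: abs_if split: if_splits)
  then have opposite: "int p1 * int q2 - int p2 * int q1 = int t1 * int r2 - int t2 * int r1"
    by (simp add: algebra_simps)
  have "\<bar>int t1 * int r2 - int t2 * int r1\<bar> = 1"
    using det(2) by (metis abs_minus_commute mult.commute)
  then have "int p1 = int t1 \<and> int p2 = int t2"
    by (intro unimodular_split_unique_oriented[OF _ _ _ _ _ _ _ _ _ _ opposite refl])
      (use sum in simp_all)
  with sum show ?thesis by simp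
qed

lemma farey_step_unique:
  fixes a b c d a' b' c' d' :: nat
  assumes "a + 2 * c = a' + 2 * c'" "b + 2 * d = b' + 2 * d'"
    and det: "\<bar>int a * int d - int b * int c\<bar> = 1" "\<bar>int a' * int d' - int b' * int c'\<bar> = 1"
  shows "a = a' \<and> b = b' \<and> c = c' \<and> d = d'"
proof -
  \<comment> \<open>(a + 2c)/(b + 2d) is the mediant of the Farey neighbours c/d and (a + c)/(b + d)\<close>
  have "\<bar>int c * int (b + d) - int d * int (a + c)\<bar> = 1"
    "\<bar>int c' * int (b' + d') - int d' * int (a' + c')\<bar> = 1"
    using det by (simp_all add: algebra_simps abs_minus_commute)
  with assms(1,2) have "(c = c' \<and> d = d' \<and> a + c = a' + c' \<and> b + d = b' + d') \<or>
      (c = a' + c' \<and> d = b' + d' \<and> a + c = c' \<and> b + d = d')"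
    by (intro unimodular_split_unique) simp_all
  with det(1) show ?thesis by auto
qed

lemma markov_rel_base:
  assumes "markov_rel x y z a b v" "a \<le> 1" "b \<le> 1"
  shows "(a = 1 \<and> b = 0 \<and> v = y) \<or> (a = 0 \<and> b = 1 \<and> v = x) \<or>
    (a = 1 \<and> b = 1 \<and> v = (x\<^sup>2 + y\<^sup>2) / z)"
  using assms(1)
proof cases
  case (step a' b' p c d q r)
  with farey_step_not_base[OF step(7)] assms(2,3) show ?thesis by linarith
qed simp_all

lemma markov_rel_functional:
  "markov_rel x y z a b v \<Longrightarrow> markov_rel x y z a b v' \<Longrightarrow> v' = v"
proof (induction arbitrary: v' rule: markov_rel.induct)
  case (step a b p c d q r)
  note det = step.hyps(4) and IH = step.IH
  from step.prems show ?case
  proof cases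
    case (step a' b' p' c' d' q' r')
    then have "a' = a \<and> b' = b \<and> c' = c \<and> d' = d"
      using farey_step_unique[of a' c' a c b' d' b d] det by simp
    with step IH show ?thesis by simp
  qed (use farey_step_not_base[OF det] in simp_all)
qed (drule markov_rel_base; simp)+

lemma markov_eqI: "markov_rel x y z a b v \<Longrightarrow> markov a b x y z = v"
  unfolding markov_def by (blast intro: markov_rel_functional)

lemma farey_left_mediant_le:
  fixes a b c d :: nat
  assumes det: "a * d = b * c + 1" and "2 * a + c \<le> 2 * b + d"
  shows "a + c \<le> b + d"
proof (rule ccontr)
  assume "\<not> ?thesis"
  with assms(2) have "a * d \<le> b * c" by (intro mult_mono) simp_all
  with det show False by linarith
qed

lemma farey_right_mediant_le:
  fixes a b c d :: nat
  assumes det: "a * d = b * c + 1" and "a + 2 * c \<le> b + 2 * d"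
  shows "a + c \<le> b + d"
proof (rule ccontr)
  assume "\<not> ?thesis"
  with assms(2) have "(b + 2) * (c + 1) \<le> a * d" by (intro mult_mono) simp_all
  with det show False by (simp add: algebra_simps)
qed

(* markov_rel only reaches 1/0 and the fractions in [0, 1], hence the bound on the mediant. *)
lemma cohn_tree_markov_rel:
  assumes pos: "x > 0" "y > 0" "z > 0"
  defines "E W \<equiv> upper_right (mat2_eval x y z W)"
  shows "cohn_tree a b c d X Y \<Longrightarrow> a + c \<le> b + d \<Longrightarrow>
    markov_rel x y z a b (E X) \<and> markov_rel x y z c d (E Y) \<and>
    markov_rel x y z (a + c) (b + d) (E (lmat_mult X Y))"
proof (induction rule: cohn_tree.induct)
  case root
  show ?case
    using markov_rel.intros[of x y z] pos
    by (simp add: E_def upper_right_cohn_A upper_right_cohn_B upper_right_cohn_BA)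
next
  case (left a b c d X Y)
  have det: "a * d = b * c + 1" by (rule cohn_tree_det[OF left.hyps])
  then have int_det: "int a * int d = int b * int c + 1" by (metis of_nat_1 of_nat_add of_nat_mult)
  have "a + c \<le> b + d" using farey_left_mediant_le[OF det] left.prems by simp
  with left.IH have IH: "markov_rel x y z a b (E X)" "markov_rel x y z c d (E Y)"
    "markov_rel x y z (c + a) (d + b) (E (lmat_mult X Y))"
    by (simp_all add: add.commute)
  have "markov_rel x y z (c + 2 * a) (d + 2 * b) (((E X)\<^sup>2 + (E (lmat_mult X Y))\<^sup>2) / E Y)"
    by (rule markov_rel.step[OF IH(2,1,3)]) (use int_det left.prems in \<open>simp_all add: algebra_simps\<close>)
  with IH cohn_tree_upper_right_children(1)[OF pos left.hyps] show ?case
    by (simp add: E_def mult_2 add_ac)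
next
  case (right a b c d X Y)
  have det: "a * d = b * c + 1" by (rule cohn_tree_det[OF right.hyps])
  then have int_det: "int a * int d = int b * int c + 1" by (metis of_nat_1 of_nat_add of_nat_mult)
  have "a + c \<le> b + d" using farey_right_mediant_le[OF det] right.prems by simp
  with right.IH have IH: "markov_rel x y z a b (E X)" "markov_rel x y z c d (E Y)"
    "markov_rel x y z (a + c) (b + d) (E (lmat_mult X Y))"
    by simp_all
  have "markov_rel x y z (a + 2 * c) (b + 2 * d) (((E Y)\<^sup>2 + (E (lmat_mult X Y))\<^sup>2) / E X)"
    by (rule markov_rel.step[OF IH]) (use int_det right.prems in simp_all)
  with IH cohn_tree_upper_right_children(2)[OF pos right.hyps] show ?case
    by (simp add: E_def mult_2 add_ac)
qed

section \<open>Reading off the polynomial\<close>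

definition shifted_monomial :: "nat \<Rightarrow> nat \<Rightarrow> nat \<times> nat \<times> nat \<Rightarrow> monomial" where
  "shifted_monomial a b t = (case t of (i, j, k) \<Rightarrow>
     (2 * int i + 1 - int a, 2 * int j + 1 - int b, 2 * int k + 1 - int (a + b)))"

lemma inj_shifted_monomial: "inj (shifted_monomial a b)"
  by (rule injI) (auto simp: shifted_monomial_def split: prod.splits)

lemma power_mult_power_int_shift:
  fixes x :: real
  assumes "x \<noteq> 0" "1 \<le> n"
  shows "x ^ (n - 1) * power_int x (2 * int i + 1 - int n) = (x\<^sup>2) ^ i"
proof -
  have "x ^ (n - 1) * power_int x (2 * int i + 1 - int n) =
      power_int x (int (n - 1) + (2 * int i + 1 - int n))"
    using assms(1) by (simp add: power_int_add)
  also have "int (n - 1) + (2 * int i + 1 - int n) = int (2 * i)" using assms(2) by simp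
  also have "power_int x (int (2 * i)) = (x\<^sup>2) ^ i" by (simp only: power_int_of_nat power_mult)
  finally show ?thesis .
qed

lemma monomial_value_shifted_monomial:
  assumes "x \<noteq> 0" "y \<noteq> 0" "z \<noteq> 0" "1 \<le> a" "1 \<le> b"
  shows "x ^ (a - 1) * y ^ (b - 1) * z ^ (a + b - 1) * monomial_value x y z (shifted_monomial a b (i, j, k))
      = (x\<^sup>2) ^ i * (y\<^sup>2) ^ j * (z\<^sup>2) ^ k"
proof -
  have x: "x ^ (a - 1) * power_int x (2 * int i + 1 - int a) = (x\<^sup>2) ^ i"
    using assms by (intro power_mult_power_int_shift) simp_all
  have y: "y ^ (b - 1) * power_int y (2 * int j + 1 - int b) = (y\<^sup>2) ^ j"
    using assms by (intro power_mult_power_int_shift) simp_all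
  have z: "z ^ (a + b - 1) * power_int z (2 * int k + 1 - int (a + b)) = (z\<^sup>2) ^ k"
    using assms by (intro power_mult_power_int_shift) simp_all
  have "x ^ (a - 1) * y ^ (b - 1) * z ^ (a + b - 1) * monomial_value x y z (shifted_monomial a b (i, j, k))
      = (x ^ (a - 1) * power_int x (2 * int i + 1 - int a)) *
        (y ^ (b - 1) * power_int y (2 * int j + 1 - int b)) *
        (z ^ (a + b - 1) * power_int z (2 * int k + 1 - int (a + b)))"
    by (simp add: shifted_monomial_def mult_ac)
  then show ?thesis
    unfolding x y z .
qed

lemma eval3_count_shifted_monomial:
  fixes M :: lpoly
  assumes shifted: "\<forall>m\<in>#M. \<exists>i j k. i + j + k = n \<and> m = shifted_monomial a b (i, j, k)"
    and "x \<noteq> 0" "y \<noteq> 0" "z \<noteq> 0" "1 \<le> a" "1 \<le> b"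
  shows "eval3 (\<lambda>i j k. count M (shifted_monomial a b (i, j, k))) n (x\<^sup>2) (y\<^sup>2) (z\<^sup>2) =
    x ^ (a - 1) * y ^ (b - 1) * z ^ (a + b - 1) * lpoly_value x y z M"
proof -
  define D where "D = x ^ (a - 1) * y ^ (b - 1) * z ^ (a + b - 1)"
  define box where "box = {..n} \<times> {..n} \<times> {..n}"
  let ?\<phi> = "shifted_monomial a b"
  have "eval3 (\<lambda>i j k. count M (?\<phi> (i, j, k))) n (x\<^sup>2) (y\<^sup>2) (z\<^sup>2) =
      (\<Sum>(i, j, k)\<in>box. real (count M (?\<phi> (i, j, k))) * (x\<^sup>2) ^ i * (y\<^sup>2) ^ j * (z\<^sup>2) ^ k)"
    unfolding eval3_def box_def by (simp add: sum.cartesian_product)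
  also have "\<dots> = D * (\<Sum>t\<in>box. real (count M (?\<phi> t)) * monomial_value x y z (?\<phi> t))"
    unfolding sum_distrib_left
  proof (intro sum.cong refl, clarify)
    fix i j k
    have "real (count M (?\<phi> (i, j, k))) * (x\<^sup>2) ^ i * (y\<^sup>2) ^ j * (z\<^sup>2) ^ k =
        real (count M (?\<phi> (i, j, k))) * ((x\<^sup>2) ^ i * (y\<^sup>2) ^ j * (z\<^sup>2) ^ k)"
      by (simp only: mult.assoc)
    also have "\<dots> = real (count M (?\<phi> (i, j, k))) * (D * monomial_value x y z (?\<phi> (i, j, k)))"
      unfolding D_def by (simp only: monomial_value_shifted_monomial[OF assms(2-6)])
    finally show "real (count M (?\<phi> (i, j, k))) * (x\<^sup>2) ^ i * (y\<^sup>2) ^ j * (z\<^sup>2) ^ k =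
        D * (real (count M (?\<phi> (i, j, k))) * monomial_value x y z (?\<phi> (i, j, k)))"
      by (simp only: mult.left_commute)
  qed
  also have "(\<Sum>t\<in>box. real (count M (?\<phi> t)) * monomial_value x y z (?\<phi> t)) =
      (\<Sum>m\<in>?\<phi> ` box. real (count M m) * monomial_value x y z m)"
  proof -
    have "inj_on ?\<phi> box" using inj_shifted_monomial by (rule inj_on_subset) simp
    then show ?thesis by (simp add: sum.reindex comp_def)
  qed
  also have "\<dots> = lpoly_value x y z M"
    unfolding lpoly_value_def
    by (rule sum_mset_eq_sum_count[symmetric]) (use shifted in \<open>force simp: box_def\<close>)+
  finally show ?thesis by (simp add: D_def)
qed

lemma cohn_exponent_upper_right_shifted:
  assumes "cohn_exponent a b False True m" "1 \<le> a" "1 \<le> b"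
  shows "\<exists>i j k. i + j + k = a + b - 1 \<and> m = shifted_monomial a b (i, j, k)"
proof -
  obtain e1 e2 e3 where m: "m = (e1, e2, e3)" by (cases m)
  have exps: "e1 + e2 + e3 = 1" "1 - int a \<le> e1" "1 - int b \<le> e2" "1 - int a - int b \<le> e3"
    using assms unfolding m by simp_all
  have "even (e1 - int a - 1)" "even (e2 - int b - 1)" "even (e3 - int a - int b - 1)"
    using assms(1) unfolding m by simp_all
  then have "even (e1 + int a - 1)" "even (e2 + int b - 1)" "even (e3 + int a + int b - 1)"
    by simp_all
  then obtain i j k where ijk: "e1 + int a - 1 = 2 * i" "e2 + int b - 1 = 2 * j"
    "e3 + int a + int b - 1 = 2 * k"
    by (elim evenE)
  with exps have "0 \<le> i" "0 \<le> j" "0 \<le> k" by linarith+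
  then obtain i' j' k' where "i = int i'" "j = int j'" "k = int k'" by (metis nonneg_eq_int)
  with ijk exps assms(2,3) show ?thesis
    by (intro exI[of _ i'] exI[of _ j'] exI[of _ k']) (simp add: m shifted_monomial_def)
qed

lemma cohn_shape_upper_right_polynomial:
  assumes shape: "cohn_shape a b W" and "1 \<le> a" "1 \<le> b"
  defines "c \<equiv> \<lambda>i j k. count (upper_right W) (shifted_monomial a b (i, j, k))"
  shows "homogeneous3 c (a + b - 1)" "not_div_u c" "not_div_v c" "not_div_w c"
    and "x \<noteq> 0 \<Longrightarrow> y \<noteq> 0 \<Longrightarrow> z \<noteq> 0 \<Longrightarrow>
      eval3 c (a + b - 1) (x\<^sup>2) (y\<^sup>2) (z\<^sup>2) =
        x ^ (a - 1) * y ^ (b - 1) * z ^ (a + b - 1) * lpoly_value x y z (upper_right W)"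
proof -
  have shifted: "\<forall>m\<in>#upper_right W. \<exists>i j k. i + j + k = a + b - 1 \<and> m = shifted_monomial a b (i, j, k)"
    using shape assms(2,3) unfolding cohn_shape_def by (blast intro: cohn_exponent_upper_right_shifted)
  have coeff: "c i j k \<noteq> 0 \<longleftrightarrow> shifted_monomial a b (i, j, k) \<in># upper_right W" for i j k
    by (simp add: c_def)
  have witness: "\<exists>i j k. c i j k \<noteq> 0 \<and> P (shifted_monomial a b (i, j, k))"
    if "\<exists>m\<in>#upper_right W. P m" for P
  proof -
    from that obtain m where "m \<in># upper_right W" "P m" by blast
    with shifted obtain i j k where "m = shifted_monomial a b (i, j, k)" by blast
    with \<open>m \<in># upper_right W\<close> \<open>P m\<close> show ?thesis using coeff by blast
  qed
  show "homogeneous3 c (a + b - 1)"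
    unfolding homogeneous3_def
  proof (intro allI impI)
    fix i j k assume "c i j k \<noteq> 0"
    with shifted coeff obtain i' j' k' where "i' + j' + k' = a + b - 1"
      "shifted_monomial a b (i, j, k) = shifted_monomial a b (i', j', k')" by blast
    with inj_shifted_monomial show "i + j + k = a + b - 1" by (simp add: inj_eq)
  qed
  have "\<exists>m\<in>#upper_right W. fst m = 1 - int a"
    using shape assms(2) unfolding cohn_shape_def by blast
  from witness[OF this] show "not_div_u c"
    unfolding not_div_u_def by (auto simp: shifted_monomial_def)
  have "\<exists>m\<in>#upper_right W. fst (snd m) = 1 - int b"
    using shape assms(3) unfolding cohn_shape_def by blast
  from witness[OF this] show "not_div_v c"
    unfolding not_div_v_def by (auto simp: shifted_monomial_def)
  have "\<exists>m\<in>#upper_right W. snd (snd m) = of_bool True - of_bool False - int a - int b"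
    using shape unfolding cohn_shape_def by blast
  from witness[OF this] show "not_div_w c"
    unfolding not_div_w_def by (auto simp: shifted_monomial_def)
  show "x \<noteq> 0 \<Longrightarrow> y \<noteq> 0 \<Longrightarrow> z \<noteq> 0 \<Longrightarrow>
      eval3 c (a + b - 1) (x\<^sup>2) (y\<^sup>2) (z\<^sup>2) =
        x ^ (a - 1) * y ^ (b - 1) * z ^ (a + b - 1) * lpoly_value x y z (upper_right W)"
    unfolding c_def using shifted assms(2,3) by (intro eval3_count_shifted_monomial)
qed

theorem theorem3p1:
  fixes a b :: nat
  assumes "1 \<le> a" and "a \<le> b" and "coprime a b"
  shows "\<exists>c :: nat \<Rightarrow> nat \<Rightarrow> nat \<Rightarrow> nat.
           homogeneous3 c (a + b - 1) \<and> not_div_u c \<and> not_div_v c \<and> not_div_w c \<and>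
           (\<forall>x y z :: real. x > 0 \<longrightarrow> y > 0 \<longrightarrow> z > 0 \<longrightarrow>
              markov a b x y z =
                eval3 c (a + b - 1) (x\<^sup>2) (y\<^sup>2) (z\<^sup>2) / (x ^ (a - 1) * y ^ (b - 1) * z ^ (a + b - 1)))"
proof -
  have "1 \<le> b" using assms(1,2) by simp
  obtain a1 b1 a2 b2 where split: "a = a1 + a2" "b = b1 + b2" "a1 * b2 = b1 * a2 + 1"
    using coprime_farey_split[OF assms(3)] assms(1) \<open>1 \<le> b\<close> by auto
  obtain X Y where tree: "cohn_tree a1 b1 a2 b2 X Y"
    using cohn_tree_exists[OF split(3)] by blast
  define W where "W = lmat_mult X Y"
  have shape: "cohn_shape a b W"
    using cohn_tree_shape[OF tree] farey_det_pos[OF split(3)] by (simp add: W_def split cohn_shape_mult)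
  have markov: "markov a b x y z = lpoly_value x y z (upper_right W)" if "x > 0" "y > 0" "z > 0" for x y z
    using cohn_tree_markov_rel[OF that tree] assms(2) split by (simp add: W_def mat2_eval_def markov_eqI)
  define c where "c = (\<lambda>i j k. count (upper_right W) (shifted_monomial a b (i, j, k)))"
  note poly = cohn_shape_upper_right_polynomial[OF shape assms(1) \<open>1 \<le> b\<close>, folded c_def]
  show ?thesis
  proof (intro exI[of _ c] conjI allI impI)
    fix x y z :: real assume "x > 0" "y > 0" "z > 0"
    with poly(5) markov show "markov a b x y z =
        eval3 c (a + b - 1) (x\<^sup>2) (y\<^sup>2) (z\<^sup>2) / (x ^ (a - 1) * y ^ (b - 1) * z ^ (a + b - 1))"
      by simp
  qed (use poly in simp_all)
qed

end
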